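(* Let $G$ be a finite connected graph with node set $V$ and diameter $\operatorname{diam}(G)$. Algorithm 3 (described in the context), for any way of choosing the node $x$ in each iteration, terminates and outputs a node $b$ and a set $U$ such that $e(b)=\operatorname{diam}(G)$ and $U$ is a diameter certificate of $G$ with $|U|\le\pi_{1/3}$, using $O(\pi_{1/3})$ one-to-all distance queries. Here, for $\alpha>0$, $\pi_\alpha$ is the maximum size of a packing for the collection $\mathcal{D}_\alpha=\{B(u,\alpha(\operatorname{diam}(G)-e(u))):u\in V\}$. Moreover, $|U|\le\frac{\pi_{1/3}}{\pi_{[1]}}\cdot\kappa$, where $\kappa$ is the minimum size of a diameter certificate of $G$ and $\pi_{[1]}$ is the maximum size of a packing for $\mathcal{D}_{[1]}=\{B[u,\operatorname{diam}(G)-e(u)]:u\in V\}$.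
   Context: $G$ is undirected, unweighted, connected with finite node set $V$; $d$ is the shortest-path distance, $e(u)=\max_v d(u,v)$, $\operatorname{diam}(G)=\max_u e(u)$. Balls: $B[u,\rho]=\{v: d(u,v)\le\rho\}$, $B(u,\rho)=\{v:d(u,v)<\rho\}$. A packing for a collection $\mathcal{S}$ of subsets of $V$ is a set $P\subseteq V$ such that every set of $\mathcal{S}$ contains at most one element of $P$. For $U\subseteq V$ let $e^U(v)=\min_{x\in U}(d(v,x)+e(x))$ ($=+\infty$ if $U=\emptyset$). A diameter certificate is a set $U$ with $e^U(v)\le\operatorname{diam}(G)$ for all $v$. A one-to-all distance query from $x$ computes $(d(x,v))_{v\in V}$. Algorithm 3: start with $U=K=\emptyset$. Repeat: select $u$ with $e^U(u)$ maximal (ties arbitrary); query from $u$, compute $e(u)$, add $u$ to $K$; choose any node $x$ with $d(u,x)+e(x)=e(u)$ (e.g. $x=u$); query from $x$, compute $e(x)$, add $x$ to $U$ and update $e^U$. Stop as soon as $\max_{w\in K}e(w)\ge\max_{v\in V}e^U(v)$, and output $b\in K$ maximizing $e$ over $K$, together with $e(b)$ and $U$. *)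

theory Defs
  imports Main "HOL-Library.Extended_Nat"
begin

definition graph :: "'a set \<Rightarrow> ('a \<Rightarrow> 'a \<Rightarrow> bool) \<Rightarrow> bool" where
  "graph V E \<longleftrightarrow> finite V \<and> (\<forall>u v. E u v \<longrightarrow> u \<in> V \<and> v \<in> V)
     \<and> (\<forall>u v. E u v \<longrightarrow> E v u) \<and> (\<forall>u. \<not> E u u)"

definition walk :: "'a set \<Rightarrow> ('a \<Rightarrow> 'a \<Rightarrow> bool) \<Rightarrow> 'a list \<Rightarrow> bool" where
  "walk V E xs \<longleftrightarrow> xs \<noteq> [] \<and> set xs \<subseteq> V \<and>
     (\<forall>i. Suc i < length xs \<longrightarrow> E (xs ! i) (xs ! Suc i))"

definition connected_graph :: "'a set \<Rightarrow> ('a \<Rightarrow> 'a \<Rightarrow> bool) \<Rightarrow> bool" where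
  "connected_graph V E \<longleftrightarrow> V \<noteq> {} \<and>
     (\<forall>u\<in>V. \<forall>v\<in>V. \<exists>xs. walk V E xs \<and> hd xs = u \<and> last xs = v)"

definition gdist :: "'a set \<Rightarrow> ('a \<Rightarrow> 'a \<Rightarrow> bool) \<Rightarrow> 'a \<Rightarrow> 'a \<Rightarrow> nat" where
  "gdist V E u v = (LEAST n. \<exists>xs. walk V E xs \<and> hd xs = u \<and> last xs = v \<and> length xs = Suc n)"

definition ecc :: "'a set \<Rightarrow> ('a \<Rightarrow> 'a \<Rightarrow> bool) \<Rightarrow> 'a \<Rightarrow> nat" where
  "ecc V E u = Max (gdist V E u ` V)"

definition diam :: "'a set \<Rightarrow> ('a \<Rightarrow> 'a \<Rightarrow> bool) \<Rightarrow> nat" where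
  "diam V E = Max (ecc V E ` V)"

definition closed_ball :: "'a set \<Rightarrow> ('a \<Rightarrow> 'a \<Rightarrow> bool) \<Rightarrow> 'a \<Rightarrow> real \<Rightarrow> 'a set" where
  "closed_ball V E u r = {v \<in> V. real (gdist V E u v) \<le> r}"

definition open_ball :: "'a set \<Rightarrow> ('a \<Rightarrow> 'a \<Rightarrow> bool) \<Rightarrow> 'a \<Rightarrow> real \<Rightarrow> 'a set" where
  "open_ball V E u r = {v \<in> V. real (gdist V E u v) < r}"

definition packing :: "'a set \<Rightarrow> 'a set set \<Rightarrow> 'a set \<Rightarrow> bool" where
  "packing V S P \<longleftrightarrow> P \<subseteq> V \<and> (\<forall>A\<in>S. card (A \<inter> P) \<le> 1)"

definition D_open :: "'a set \<Rightarrow> ('a \<Rightarrow> 'a \<Rightarrow> bool) \<Rightarrow> real \<Rightarrow> 'a set set" where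
  "D_open V E \<alpha> = (\<lambda>u. open_ball V E u (\<alpha> * (real (diam V E) - real (ecc V E u)))) ` V"

definition D_closed1 :: "'a set \<Rightarrow> ('a \<Rightarrow> 'a \<Rightarrow> bool) \<Rightarrow> 'a set set" where
  "D_closed1 V E = (\<lambda>u. closed_ball V E u (real (diam V E) - real (ecc V E u))) ` V"

definition pi_open :: "'a set \<Rightarrow> ('a \<Rightarrow> 'a \<Rightarrow> bool) \<Rightarrow> real \<Rightarrow> nat" where
  "pi_open V E \<alpha> = Max (card ` {P. packing V (D_open V E \<alpha>) P})"

definition pi_closed1 :: "'a set \<Rightarrow> ('a \<Rightarrow> 'a \<Rightarrow> bool) \<Rightarrow> nat" where
  "pi_closed1 V E = Max (card ` {P. packing V (D_closed1 V E) P})"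

definition eU :: "'a set \<Rightarrow> ('a \<Rightarrow> 'a \<Rightarrow> bool) \<Rightarrow> 'a set \<Rightarrow> 'a \<Rightarrow> enat" where
  "eU V E U v = (if U = {} then \<infinity>
     else enat (Min ((\<lambda>x. gdist V E v x + ecc V E x) ` U)))"

definition diam_certificate :: "'a set \<Rightarrow> ('a \<Rightarrow> 'a \<Rightarrow> bool) \<Rightarrow> 'a set \<Rightarrow> bool" where
  "diam_certificate V E U \<longleftrightarrow> U \<subseteq> V \<and> (\<forall>v\<in>V. eU V E U v \<le> enat (diam V E))"

definition kappa :: "'a set \<Rightarrow> ('a \<Rightarrow> 'a \<Rightarrow> bool) \<Rightarrow> nat" where
  "kappa V E = Min (card ` {U. diam_certificate V E U})"

text \<open>Algorithm 3. State = (U, K). One iteration (two distance queries):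
  pick u maximising e^U over V (ties arbitrary), pick any x with d(u,x)+e(x)=e(u),
  add u to K and x to U.\<close>
definition alg_step :: "'a set \<Rightarrow> ('a \<Rightarrow> 'a \<Rightarrow> bool) \<Rightarrow> 'a set \<times> 'a set \<Rightarrow> 'a set \<times> 'a set \<Rightarrow> bool" where
  "alg_step V E s s' \<longleftrightarrow> (\<exists>u x. u \<in> V \<and> (\<forall>v\<in>V. eU V E (fst s) v \<le> eU V E (fst s) u)
     \<and> x \<in> V \<and> gdist V E u x + ecc V E x = ecc V E u
     \<and> s' = (insert x (fst s), insert u (snd s)))"

text \<open>Stopping test (checked after each iteration): max_{w in K} e(w) >= max_v e^U(v).\<close>
definition alg_stop :: "'a set \<Rightarrow> ('a \<Rightarrow> 'a \<Rightarrow> bool) \<Rightarrow> 'a set \<times> 'a set \<Rightarrow> bool" where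
  "alg_stop V E s \<longleftrightarrow> snd s \<noteq> {} \<and>
     Max (eU V E (fst s) ` V) \<le> enat (Max (ecc V E ` snd s))"

end

theory Submission
  imports Defs
begin

text \<open>Let \<open>u\<^sub>0, u\<^sub>1, \<dots>\<close> be the nodes selected by the algorithm. Once \<open>x\<^sub>j\<close> is in \<open>U\<close>,
  the triangle inequality gives \<open>e\<^sup>U(v) \<le> d(v, u\<^sub>j) + e(u\<^sub>j)\<close> for every \<open>v\<close>. For \<open>j < i\<close> the
  node \<open>u\<^sub>i\<close> maximises \<open>e\<^sup>U\<close>, whose maximum is always at least \<open>diam(G)\<close> (as \<open>e\<^sup>U \<ge> e\<close>) and,
  since the algorithm has not stopped, exceeds \<open>e(u\<^sub>j)\<close>. Hence \<open>u\<^sub>i \<noteq> u\<^sub>j\<close> and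
  \<open>diam(G) \<le> d(u\<^sub>i, u\<^sub>j) + e(u\<^sub>j)\<close>, which forbids two selected nodes in a common ball
  \<open>B(w, (diam(G) - e(w))/3)\<close>: the selected nodes form a packing for \<open>D\<^sub>1\<^sub>/\<^sub>3\<close>. This bounds the
  number of iterations, and at the stopping test \<open>max e\<^sup>U \<le> max\<^sub>K e \<le> diam(G)\<close> yields both
  correctness claims. Finally a packing for \<open>D\<^sub>[\<^sub>1\<^sub>]\<close> injects into every certificate, so
  \<open>\<pi>\<^sub>[\<^sub>1\<^sub>] \<le> \<kappa>\<close>.\<close>

lemma walk_Cons_Cons [simp]:
  "walk V E (x # y # zs) \<longleftrightarrow> x \<in> V \<and> E x y \<and> walk V E (y # zs)"
  by (auto simp: walk_def nth_Cons' less_Suc_eq_0_disj split: if_splits)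

lemma walk_append:
  "walk V E xs \<Longrightarrow> walk V E ys \<Longrightarrow> last xs = hd ys \<Longrightarrow> walk V E (xs @ tl ys)"
proof (induction xs rule: induct_list012)
  case 1
  then show ?case by (simp add: walk_def)
next
  case (2 x)
  then show ?case by (cases ys) (auto simp: walk_def)
next
  case (3 x y zs)
  then show ?case by auto
qed

lemma walk_rev:
  assumes "\<And>u v. E u v \<Longrightarrow> E v u" and "walk V E xs"
  shows "walk V E (rev xs)"
  using assms(2)
proof (induction xs rule: induct_list012)
  case (3 x y zs)
  have "walk V E (rev (y # zs))"
    using 3 by simp
  moreover have "walk V E [y, x]"
    using 3 assms(1) by (auto simp: walk_def)
  ultimately have "walk V E (rev (y # zs) @ tl [y, x])"
    by (intro walk_append) auto
  then show ?case by simp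
qed (auto simp: walk_def)

lemma finite_packings: "finite V \<Longrightarrow> finite {P. packing V S P}"
  by (rule finite_subset[of _ "Pow V"]) (auto simp: packing_def)

locale fin_conn_graph =
  fixes V :: "'a set" and E :: "'a \<Rightarrow> 'a \<Rightarrow> bool"
  assumes graph: "graph V E" and connected: "connected_graph V E"
begin

lemma finite_V: "finite V"
  using graph by (simp add: graph_def)

lemma V_nonempty: "V \<noteq> {}"
  using connected by (simp add: connected_graph_def)

lemma gdist_attained:
  assumes "u \<in> V" "v \<in> V"
  obtains xs where "walk V E xs" "hd xs = u" "last xs = v" "length xs = Suc (gdist V E u v)"
proof -
  obtain xs where xs: "walk V E xs" "hd xs = u" "last xs = v"
    using connected assms unfolding connected_graph_def by blast
  then have "\<exists>n xs. walk V E xs \<and> hd xs = u \<and> last xs = v \<and> length xs = Suc n"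
    by (intro exI[of _ "length xs - 1"] exI[of _ xs]) (auto simp: walk_def)
  then have "\<exists>xs. walk V E xs \<and> hd xs = u \<and> last xs = v \<and> length xs = Suc (gdist V E u v)"
    unfolding gdist_def by (rule LeastI_ex)
  with that show ?thesis by blast
qed

lemma gdist_le_length:
  assumes "walk V E xs" "hd xs = u" "last xs = v"
  shows "gdist V E u v \<le> length xs - 1"
  unfolding gdist_def using assms by (intro Least_le exI[of _ xs]) (auto simp: walk_def)

lemma gdist_self: "u \<in> V \<Longrightarrow> gdist V E u u = 0"
  using gdist_le_length[of "[u]" u u] by (simp add: walk_def)

lemma gdist_sym:
  assumes "u \<in> V" "v \<in> V"
  shows "gdist V E u v = gdist V E v u"
proof -
  have "gdist V E v u \<le> gdist V E u v" if uv: "u \<in> V" "v \<in> V" for u v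
  proof -
    obtain xs where xs: "walk V E xs" "hd xs = u" "last xs = v" "length xs = Suc (gdist V E u v)"
      using gdist_attained[OF uv] .
    have "walk V E (rev xs)"
      using graph xs(1) by (intro walk_rev) (auto simp: graph_def)
    moreover have "xs \<noteq> []" using xs(1) by (simp add: walk_def)
    ultimately have "gdist V E v u \<le> length (rev xs) - 1"
      using xs by (intro gdist_le_length) (auto simp: hd_rev last_rev)
    then show ?thesis using xs(4) by simp
  qed
  then show ?thesis using assms by (meson le_antisym)
qed

lemma gdist_triangle:
  assumes "u \<in> V" "v \<in> V" "w \<in> V"
  shows "gdist V E u w \<le> gdist V E u v + gdist V E v w"
proof -
  obtain xs where xs: "walk V E xs" "hd xs = u" "last xs = v" "length xs = Suc (gdist V E u v)"
    using gdist_attained[OF assms(1,2)] .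
  obtain ys where ys: "walk V E ys" "hd ys = v" "last ys = w" "length ys = Suc (gdist V E v w)"
    using gdist_attained[OF assms(2,3)] .
  have "last (xs @ tl ys) = w"
    using xs ys by (cases ys) auto
  then have "gdist V E u w \<le> length (xs @ tl ys) - 1"
    using xs ys by (intro gdist_le_length walk_append) (auto simp: walk_def)
  then show ?thesis using xs(4) ys(4) by simp
qed

lemma gdist_le_ecc: "u \<in> V \<Longrightarrow> v \<in> V \<Longrightarrow> gdist V E u v \<le> ecc V E u"
  unfolding ecc_def using finite_V by simp

lemma ecc_attained:
  assumes "u \<in> V"
  obtains v where "v \<in> V" "ecc V E u = gdist V E u v"
proof -
  have "ecc V E u \<in> gdist V E u ` V"
    unfolding ecc_def using finite_V V_nonempty by (intro Max_in) auto
  with that show ?thesis by blast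
qed

lemma ecc_le_gdist_ecc:
  assumes "v \<in> V" "x \<in> V"
  shows "ecc V E v \<le> gdist V E v x + ecc V E x"
proof -
  obtain y where y: "y \<in> V" "ecc V E v = gdist V E v y"
    using ecc_attained[OF assms(1)] .
  have "gdist V E v y \<le> gdist V E v x + gdist V E x y"
    using gdist_triangle assms y(1) by blast
  also have "\<dots> \<le> gdist V E v x + ecc V E x"
    using gdist_le_ecc assms(2) y(1) by simp
  finally show ?thesis using y(2) by simp
qed

lemma ecc_le_diam: "u \<in> V \<Longrightarrow> ecc V E u \<le> diam V E"
  unfolding diam_def using finite_V by simp

lemma diam_attained:
  obtains v where "v \<in> V" "ecc V E v = diam V E"
proof -
  have "diam V E \<in> ecc V E ` V"
    unfolding diam_def using finite_V V_nonempty by (intro Max_in) auto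
  with that show ?thesis by (metis imageE)
qed

lemma eU_le: "finite U \<Longrightarrow> x \<in> U \<Longrightarrow> eU V E U v \<le> enat (gdist V E v x + ecc V E x)"
  unfolding eU_def by auto

lemma eU_attained:
  assumes "finite U" "U \<noteq> {}"
  obtains x where "x \<in> U" "eU V E U v = enat (gdist V E v x + ecc V E x)"
proof -
  have "Min ((\<lambda>x. gdist V E v x + ecc V E x) ` U) \<in> (\<lambda>x. gdist V E v x + ecc V E x) ` U"
    using assms by (intro Min_in) auto
  with that assms(2) show ?thesis by (auto simp: eU_def)
qed

lemma ecc_le_eU:
  assumes "finite U" "U \<subseteq> V" "v \<in> V"
  shows "enat (ecc V E v) \<le> eU V E U v"
proof (cases "U = {}")
  case False
  then obtain x where "x \<in> U" "eU V E U v = enat (gdist V E v x + ecc V E x)"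
    using eU_attained[OF assms(1)] by blast
  then show ?thesis using ecc_le_gdist_ecc assms(2,3) by auto
qed (simp add: eU_def)

lemma diam_le_max_eU:
  assumes "finite U" "U \<subseteq> V" and max: "\<And>v. v \<in> V \<Longrightarrow> eU V E U v \<le> eU V E U u"
  shows "enat (diam V E) \<le> eU V E U u"
proof -
  obtain v where "v \<in> V" "ecc V E v = diam V E"
    using diam_attained .
  then show ?thesis using ecc_le_eU[OF assms(1,2)] max by (metis order.trans)
qed

lemma eU_le_through_certified:
  assumes "finite U" "x' \<in> U" "u \<in> V" "u' \<in> V" "x' \<in> V"
    and "gdist V E u' x' + ecc V E x' = ecc V E u'"
  shows "eU V E U u \<le> enat (gdist V E u u' + ecc V E u')"
proof -
  have "eU V E U u \<le> enat (gdist V E u x' + ecc V E x')"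
    using eU_le assms(1,2) .
  also have "gdist V E u x' \<le> gdist V E u u' + gdist V E u' x'"
    using gdist_triangle assms(3-5) .
  then have "enat (gdist V E u x' + ecc V E x') \<le> enat (gdist V E u u' + ecc V E u')"
    using assms(6) by simp
  finally show ?thesis .
qed

lemma diam_certificate_V: "diam_certificate V E V"
  unfolding diam_certificate_def
proof (intro conjI ballI subset_refl)
  fix v assume "v \<in> V"
  then have "eU V E V v \<le> enat (gdist V E v v + ecc V E v)"
    using eU_le finite_V by blast
  then show "eU V E V v \<le> enat (diam V E)"
    using gdist_self ecc_le_diam \<open>v \<in> V\<close> by (simp add: order_trans)
qed

lemma packing_card_le_pi_open: "packing V (D_open V E \<alpha>) P \<Longrightarrow> card P \<le> pi_open V E \<alpha>"
  unfolding pi_open_def using finite_packings[OF finite_V] by (intro Max_ge) auto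

lemma packing_D_open_third:
  assumes "K \<subseteq> V"
    and far: "\<And>p q. p \<in> K \<Longrightarrow> q \<in> K \<Longrightarrow> p \<noteq> q \<Longrightarrow>
      diam V E \<le> gdist V E p q + max (ecc V E p) (ecc V E q)"
  shows "packing V (D_open V E (1/3)) K"
  unfolding packing_def
proof (intro conjI ballI)
  fix A assume "A \<in> D_open V E (1/3)"
  then obtain w where w: "w \<in> V"
    and A: "A = open_ball V E w (1/3 * (real (diam V E) - real (ecc V E w)))"
    unfolding D_open_def by blast
  have "\<forall>p\<in>A \<inter> K. \<forall>q\<in>A \<inter> K. p = q"
  proof (intro ballI, rule ccontr)
    fix p q assume p: "p \<in> A \<inter> K" and q: "q \<in> A \<inter> K"
    assume "p \<noteq> q"
    have pV: "p \<in> V" and qV: "q \<in> V"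
      using p q A by (auto simp: open_ball_def)
    have "gdist V E p q \<le> gdist V E w p + gdist V E w q"
      using gdist_triangle[OF pV w qV] gdist_sym[OF pV w] by simp
    moreover have "ecc V E p \<le> gdist V E w p + ecc V E w" "ecc V E q \<le> gdist V E w q + ecc V E w"
      using ecc_le_gdist_ecc[OF pV w] ecc_le_gdist_ecc[OF qV w] gdist_sym[OF pV w] gdist_sym[OF qV w]
      by simp_all
    moreover have "real (gdist V E w p) < 1/3 * (real (diam V E) - real (ecc V E w))"
      "real (gdist V E w q) < 1/3 * (real (diam V E) - real (ecc V E w))"
      using p q A by (auto simp: open_ball_def)
    moreover have "diam V E \<le> gdist V E p q + max (ecc V E p) (ecc V E q)"
      using far \<open>p \<noteq> q\<close> p q by blast
    ultimately show False
      unfolding max_def by (simp split: if_splits; linarith)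
  qed
  moreover have "finite (A \<inter> K)"
    using assms(1) finite_V finite_subset by blast
  ultimately show "card (A \<inter> K) \<le> 1"
    using card_le_Suc0_iff_eq[of "A \<inter> K"] by simp
qed (fact assms(1))

lemma certificate_nonempty: "diam_certificate V E U \<Longrightarrow> U \<noteq> {}"
  using V_nonempty by (auto simp: diam_certificate_def eU_def)

text \<open>A certificate point \<open>x\<close> serving \<open>p\<close> puts \<open>p\<close> into \<open>B[x, diam - e(x)]\<close>, so distinct
  points of a packing for \<open>D\<^sub>[\<^sub>1\<^sub>]\<close> are served by distinct certificate points.\<close>
lemma packing_D_closed1_card_le_certificate:
  assumes P: "packing V (D_closed1 V E) P" and U: "diam_certificate V E U"
  shows "card P \<le> card U"
proof -
  have PV: "P \<subseteq> V" and UV: "U \<subseteq> V"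
    using P U by (auto simp: packing_def diam_certificate_def)
  have finU: "finite U" using UV finite_V finite_subset by blast
  have "\<forall>p\<in>P. \<exists>x. x \<in> U \<and> gdist V E p x + ecc V E x \<le> diam V E"
  proof
    fix p assume "p \<in> P"
    obtain x where "x \<in> U" "eU V E U p = enat (gdist V E p x + ecc V E x)"
      using eU_attained[OF finU certificate_nonempty[OF U]] .
    moreover have "eU V E U p \<le> enat (diam V E)"
      using U \<open>p \<in> P\<close> PV by (auto simp: diam_certificate_def)
    ultimately show "\<exists>x. x \<in> U \<and> gdist V E p x + ecc V E x \<le> diam V E" by auto
  qed
  then obtain f where f: "\<forall>p\<in>P. f p \<in> U \<and> gdist V E p (f p) + ecc V E (f p) \<le> diam V E"
    by (rule bchoice[THEN exE]) blast
  have "inj_on f P"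
  proof (rule inj_onI)
    fix p q assume p: "p \<in> P" and q: "q \<in> P" and eq: "f p = f q"
    define B where "B = closed_ball V E (f p) (real (diam V E) - real (ecc V E (f p)))"
    have fpV: "f p \<in> V" using f p UV by blast
    have inB: "r \<in> B" if "r \<in> P" "f r = f p" for r
    proof -
      have "gdist V E (f p) r = gdist V E r (f p)"
        using gdist_sym fpV that(1) PV by blast
      then show ?thesis
        using f that PV unfolding B_def closed_ball_def by fastforce
    qed
    have "B \<in> D_closed1 V E" unfolding B_def D_closed1_def using fpV by blast
    then have "card (B \<inter> P) \<le> 1" using P by (simp add: packing_def)
    moreover have "finite (B \<inter> P)" using PV finite_V finite_subset by blast
    ultimately show "p = q"
      using inB[OF p refl] inB[OF q eq[symmetric]] p q card_le_Suc0_iff_eq[of "B \<inter> P"] by auto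
  qed
  then show ?thesis using f finU by (intro card_inj_on_le) auto
qed

lemma pi_closed1_le_kappa: "pi_closed1 V E \<le> kappa V E"
proof -
  have "packing V (D_closed1 V E) {}" by (simp add: packing_def)
  then have "pi_closed1 V E \<in> card ` {P. packing V (D_closed1 V E) P}"
    unfolding pi_closed1_def using finite_packings[OF finite_V] by (intro Max_in) auto
  then obtain P where P: "packing V (D_closed1 V E) P" "card P = pi_closed1 V E" by auto
  have "finite {U. diam_certificate V E U}"
    by (rule finite_subset[of _ "Pow V"]) (auto simp: diam_certificate_def finite_V)
  then have "kappa V E \<in> card ` {U. diam_certificate V E U}"
    unfolding kappa_def using diam_certificate_V by (intro Min_in) auto
  then obtain U where U: "diam_certificate V E U" "card U = kappa V E" by auto
  show ?thesis using packing_D_closed1_card_le_certificate[OF P(1) U(1)] P(2) U(2) by simp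
qed

lemma pi_closed1_pos: "0 < pi_closed1 V E"
proof -
  obtain v where "v \<in> V" using V_nonempty by blast
  then have "packing V (D_closed1 V E) {v}"
    by (auto simp: packing_def card_le_Suc0_iff_eq)
  then have "card {v} \<in> card ` {P. packing V (D_closed1 V E) P}"
    by blast
  then have "card {v} \<le> pi_closed1 V E"
    unfolding pi_closed1_def using finite_packings[OF finite_V] by (intro Max_ge) auto
  then show ?thesis by simp
qed

lemma alg_stop_diam_certificate:
  assumes "U \<subseteq> V" "K \<subseteq> V" "alg_stop V E (U, K)"
  shows "diam_certificate V E U"
  unfolding diam_certificate_def
proof (intro conjI ballI)
  fix v assume "v \<in> V"
  have finK: "finite K" using assms(2) finite_V finite_subset by blast
  have "eU V E U v \<le> Max (eU V E U ` V)"
    using \<open>v \<in> V\<close> finite_V by simp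
  also have "\<dots> \<le> enat (Max (ecc V E ` K))"
    using assms(3) by (simp add: alg_stop_def)
  also have "Max (ecc V E ` K) \<le> diam V E"
    using assms(2,3) finK ecc_le_diam by (auto simp: alg_stop_def)
  finally show "eU V E U v \<le> enat (diam V E)" by simp
qed (fact assms(1))

lemma alg_stop_max_ecc_eq_diam:
  assumes "U \<subseteq> V" "K \<subseteq> V" "alg_stop V E (U, K)"
    and b: "b \<in> K" "\<forall>w\<in>K. ecc V E w \<le> ecc V E b"
  shows "ecc V E b = diam V E"
proof -
  obtain v where v: "v \<in> V" "ecc V E v = diam V E"
    using diam_attained .
  have finU: "finite U" and finK: "finite K"
    using assms(1,2) finite_V finite_subset by blast+
  have "enat (diam V E) \<le> eU V E U v"
    using ecc_le_eU[OF finU assms(1) v(1)] v(2) by simp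
  also have "\<dots> \<le> Max (eU V E U ` V)"
    using v(1) finite_V by simp
  also have "\<dots> \<le> enat (Max (ecc V E ` K))"
    using assms(3) by (simp add: alg_stop_def)
  also have "Max (ecc V E ` K) = ecc V E b"
    using b finK by (intro Max_eqI) auto
  finally show ?thesis
    using ecc_le_diam b(1) assms(2) by (simp add: subset_iff le_antisym)
qed

lemma ecc_less_eU_if_not_alg_stop:
  assumes "K \<subseteq> V" "w \<in> K" "u \<in> V" "\<forall>v\<in>V. eU V E U v \<le> eU V E U u"
    and "\<not> alg_stop V E (U, K)"
  shows "enat (ecc V E w) < eU V E U u"
proof -
  have "Max (eU V E U ` V) = eU V E U u"
    using assms(3,4) finite_V by (intro Max_eqI) auto
  moreover have "ecc V E w \<le> Max (ecc V E ` K)"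
    using assms(1,2) finite_V finite_subset by (intro Max_ge) auto
  moreover have "enat (Max (ecc V E ` K)) < Max (eU V E U ` V)"
    using assms(2,5) by (auto simp: alg_stop_def not_le)
  ultimately show ?thesis
    by (metis enat_ord_simps(1) le_less_trans)
qed

end

definition alg_choice :: "'a set \<Rightarrow> ('a \<Rightarrow> 'a \<Rightarrow> bool) \<Rightarrow> 'a set \<Rightarrow> 'a \<Rightarrow> 'a \<Rightarrow> bool" where
  "alg_choice V E U u x \<longleftrightarrow> u \<in> V \<and> (\<forall>v\<in>V. eU V E U v \<le> eU V E U u)
     \<and> x \<in> V \<and> gdist V E u x + ecc V E x = ecc V E u"

lemma alg_step_iff:
  "alg_step V E s s' \<longleftrightarrow>
     (\<exists>u x. alg_choice V E (fst s) u x \<and> s' = (insert x (fst s), insert u (snd s)))"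
  unfolding alg_step_def alg_choice_def by blast

locale alg3_trace = fin_conn_graph V E for V :: "'a set" and E +
  fixes n :: nat and u x :: "nat \<Rightarrow> 'a"
  assumes choice: "i < n \<Longrightarrow> alg_choice V E (x ` {..<i}) (u i) (x i)"
    and running: "i < n \<Longrightarrow> \<not> alg_stop V E (x ` {..<i}, u ` {..<i})"
begin

lemma selected_in_V:
  assumes "i < n"
  shows "u i \<in> V" "x i \<in> V"
  using choice[OF assms] by (simp_all add: alg_choice_def)

lemma selected_far_from_earlier:
  assumes "j < i" "i < n"
  shows "diam V E \<le> gdist V E (u i) (u j) + ecc V E (u j)"
    and "u i \<noteq> u j"
proof -
  let ?U = "x ` {..<i}"
  have U: "finite ?U" "?U \<subseteq> V"
    using selected_in_V assms by auto
  have max: "\<forall>v\<in>V. eU V E ?U v \<le> eU V E ?U (u i)"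
    using choice[OF assms(2)] by (simp add: alg_choice_def)
  have "eU V E ?U (u i) \<le> enat (gdist V E (u i) (u j) + ecc V E (u j))"
    using assms choice[of j] selected_in_V[of i] selected_in_V[of j]
    by (intro eU_le_through_certified[where x' = "x j"]) (auto simp: alg_choice_def)
  moreover have "enat (diam V E) \<le> eU V E ?U (u i)"
    using diam_le_max_eU[OF U] max by blast
  moreover have "enat (ecc V E (u j)) < eU V E ?U (u i)"
    using assms selected_in_V running[OF assms(2)] max
    by (intro ecc_less_eU_if_not_alg_stop[where K = "u ` {..<i}"]) auto
  ultimately have "diam V E \<le> gdist V E (u i) (u j) + ecc V E (u j)"
    and "0 < gdist V E (u i) (u j)"
    by (metis enat_ord_simps(1) order.trans, metis enat_ord_simps(2) order.strict_trans2 less_add_same_cancel2)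
  then show "diam V E \<le> gdist V E (u i) (u j) + ecc V E (u j)" and "u i \<noteq> u j"
    using gdist_self selected_in_V assms by auto
qed

lemma inj_on_selected: "inj_on u {..<n}"
  using selected_far_from_earlier(2) by (intro linorder_inj_onI') (auto simp: eq_commute)

lemma n_le_card_V: "n \<le> card V"
  using card_inj_on_le[OF inj_on_selected _ finite_V] selected_in_V by auto

lemma n_le_pi_open_third: "n \<le> pi_open V E (1/3)"
proof -
  have "packing V (D_open V E (1/3)) (u ` {..<n})"
  proof (rule packing_D_open_third)
    fix p q assume "p \<in> u ` {..<n}" "q \<in> u ` {..<n}" "p \<noteq> q"
    then obtain i j where ij: "i < n" "j < n" "i \<noteq> j" "p = u i" "q = u j" by auto
    show "diam V E \<le> gdist V E p q + max (ecc V E p) (ecc V E q)"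
    proof (cases "j < i")
      case True
      then show ?thesis using selected_far_from_earlier(1)[of j i] ij by simp
    next
      case False
      then have "diam V E \<le> gdist V E q p + ecc V E p"
        using selected_far_from_earlier(1)[of i j] ij by simp
      then show ?thesis using gdist_sym selected_in_V ij by (simp add: le_max_iff_disj)
    qed
  qed (use selected_in_V in auto)
  then show ?thesis
    using packing_card_le_pi_open card_image[OF inj_on_selected] by fastforce
qed

end

context fin_conn_graph
begin

lemma run_trace:
  assumes run_0: "run 0 = ({}, {})"
    and run_Suc: "\<forall>i. \<not> alg_stop V E (run i) \<longrightarrow> alg_step V E (run i) (run (Suc i))"
  obtains u x where
    "\<And>n. \<forall>m<n. \<not> alg_stop V E (run m) \<Longrightarrow> run n = (x ` {..<n}, u ` {..<n})"
    "\<And>n. \<forall>m<n. \<not> alg_stop V E (run m) \<Longrightarrow> alg3_trace V E n u x"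
proof -
  have "\<forall>i. \<exists>p. \<not> alg_stop V E (run i) \<longrightarrow> alg_choice V E (fst (run i)) (fst p) (snd p)
      \<and> run (Suc i) = (insert (snd p) (fst (run i)), insert (fst p) (snd (run i)))"
    using run_Suc by (metis alg_step_iff fst_conv snd_conv)
  then obtain f where f: "\<And>i. \<not> alg_stop V E (run i) \<Longrightarrow>
      alg_choice V E (fst (run i)) (fst (f i)) (snd (f i))
      \<and> run (Suc i) = (insert (snd (f i)) (fst (run i)), insert (fst (f i)) (snd (run i)))"
    by (rule choice[THEN exE]) blast
  define u where "u i = fst (f i)" for i
  define x where "x i = snd (f i)" for i
  have run_eq: "run n = (x ` {..<n}, u ` {..<n})" if "\<forall>m<n. \<not> alg_stop V E (run m)" for n
    using that
  proof (induction n)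
    case (Suc n)
    then have "\<not> alg_stop V E (run n)" "run n = (x ` {..<n}, u ` {..<n})"
      by auto
    then show ?case
      using f[of n] by (simp add: u_def x_def lessThan_Suc)
  qed (simp add: run_0)
  have "alg3_trace V E n u x" if running: "\<forall>m<n. \<not> alg_stop V E (run m)" for n
  proof (intro alg3_trace.intro fin_conn_graph_axioms alg3_trace_axioms.intro)
    fix i assume "i < n"
    then have i: "\<not> alg_stop V E (run i)" "run i = (x ` {..<i}, u ` {..<i})"
      using running run_eq[of i] by auto
    show "alg_choice V E (x ` {..<i}) (u i) (x i)"
      using f[OF i(1)] i(2) by (simp add: u_def x_def)
    show "\<not> alg_stop V E (x ` {..<i}, u ` {..<i})"
      using i by simp
  qed
  with run_eq that show ?thesis by blast
qed

lemma run_terminates: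
  assumes "run 0 = ({}, {})"
    and "\<forall>i. \<not> alg_stop V E (run i) \<longrightarrow> alg_step V E (run i) (run (Suc i))"
  obtains n where "alg_stop V E (run n)" "\<forall>m<n. \<not> alg_stop V E (run m)"
proof -
  obtain u x where "\<And>n. \<forall>m<n. \<not> alg_stop V E (run m) \<Longrightarrow> run n = (x ` {..<n}, u ` {..<n})"
    and trace: "\<And>n. \<forall>m<n. \<not> alg_stop V E (run m) \<Longrightarrow> alg3_trace V E n u x"
    using run_trace[OF assms] by metis
  have "\<exists>n. alg_stop V E (run n)"
  proof (rule ccontr)
    assume "\<nexists>n. alg_stop V E (run n)"
    then have "alg3_trace V E (Suc (card V)) u x"
      by (intro trace) blast
    then have "Suc (card V) \<le> card V"
      by (rule alg3_trace.n_le_card_V)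
    then show False by simp
  qed
  then have "alg_stop V E (run (LEAST n. alg_stop V E (run n)))"
    by (rule LeastI_ex)
  moreover have "\<forall>m<(LEAST n. alg_stop V E (run n)). \<not> alg_stop V E (run m)"
    by (intro allI impI not_less_Least)
  ultimately show ?thesis by (rule that)
qed

end

theorem theorem4:
  shows "\<exists>c::real. \<forall>(V::nat set) (E::nat \<Rightarrow> nat \<Rightarrow> bool).
    graph V E \<and> connected_graph V E \<longrightarrow>
    (\<forall>run :: nat \<Rightarrow> nat set \<times> nat set.
       run 0 = ({}, {}) \<and>
       (\<forall>i. \<not> alg_stop V E (run i) \<longrightarrow> alg_step V E (run i) (run (Suc i))) \<longrightarrow>
       (\<exists>n. alg_stop V E (run n) \<and> (\<forall>m<n. \<not> alg_stop V E (run m)) \<and>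
          (let U = fst (run n); K = snd (run n) in
             (\<forall>b\<in>K. (\<forall>w\<in>K. ecc V E w \<le> ecc V E b) \<longrightarrow> ecc V E b = diam V E)
           \<and> diam_certificate V E U
           \<and> card U \<le> pi_open V E (1/3)
           \<and> real (2 * n) \<le> c * real (pi_open V E (1/3))
           \<and> real (card U) \<le> real (pi_open V E (1/3)) / real (pi_closed1 V E) * real (kappa V E))))"
proof (rule exI[of _ 2], intro allI impI, elim conjE, goal_cases)
  case (1 V E run)
  interpret fin_conn_graph V E using 1(1,2) by unfold_locales
  obtain u x where run_eq: "\<And>n. \<forall>m<n. \<not> alg_stop V E (run m) \<Longrightarrow> run n = (x ` {..<n}, u ` {..<n})"
    and trace: "\<And>n. \<forall>m<n. \<not> alg_stop V E (run m) \<Longrightarrow> alg3_trace V E n u x"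
    using run_trace[OF 1(3,4)] by metis
  obtain n where stop: "alg_stop V E (run n)" and not_stopped: "\<forall>m<n. \<not> alg_stop V E (run m)"
    using run_terminates[OF 1(3,4)] by blast
  interpret alg3_trace V E n u x using trace[OF not_stopped] .
  have UK: "x ` {..<n} \<subseteq> V" "u ` {..<n} \<subseteq> V" "alg_stop V E (x ` {..<n}, u ` {..<n})"
    using selected_in_V stop run_eq[OF not_stopped] by auto
  have card_U: "card (x ` {..<n}) \<le> pi_open V E (1/3)"
    using card_image_le[of "{..<n}" x] n_le_pi_open_third by simp
  have "real (pi_open V E (1/3)) \<le> real (pi_open V E (1/3)) / real (pi_closed1 V E) * real (kappa V E)"
    using pi_closed1_pos pi_closed1_le_kappa by (simp add: field_simps mult_right_mono)
  then show ?case
    using stop not_stopped run_eq[OF not_stopped] UK card_U n_le_pi_open_third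
      alg_stop_max_ecc_eq_diam[OF UK] alg_stop_diam_certificate[OF UK]
    by (intro exI[of _ n]) (auto simp: Let_def)
qed

end
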